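(* For every integer $h\ge 2$ there exist instances of the atomic model under the proportional-to-squares scheme whose Price of Stability is at least $\frac{h-1}{2}$.
   Context: Atomic model: finitely many players, player $i$ with stake $a_i>0$, $a_i<h$; threshold $h$. Each player opens her own pool or joins one; pools partition the players. A pool $C$ has reward $\rho(C)=1$ if its total stake is at least $h$ (winning) and $0$ otherwise. Proportional-to-squares scheme: player $i$ in pool $C$ receives $\frac{a_i^2}{\sum_{j\in C}a_j^2}\rho(C)$. A partition into winning pools is a Nash equilibrium if no player can strictly increase her payment by moving to another pool or opening a new pool alone. $OPT(G)$ is the maximum number of pools of stake at least $h$ in a partition of the players; $W(\Pi)$ is the number of winning pools of $\Pi$; the Price of Stability is $\min_\Pi OPT(G)/W(\Pi)$ over Nash equilibrium partitions. *)

theory Defs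
  imports Complex_Main "HOL-Library.Disjoint_Sets"
begin

definition stake :: "(nat \<Rightarrow> real) \<Rightarrow> nat set \<Rightarrow> real" where
  "stake a C = (\<Sum>j\<in>C. a j)"

definition winning :: "real \<Rightarrow> (nat \<Rightarrow> real) \<Rightarrow> nat set \<Rightarrow> bool" where
  "winning h a C \<longleftrightarrow> stake a C \<ge> h"

definition reward :: "real \<Rightarrow> (nat \<Rightarrow> real) \<Rightarrow> nat set \<Rightarrow> real" where
  "reward h a C = (if winning h a C then 1 else 0)"

definition pay :: "real \<Rightarrow> (nat \<Rightarrow> real) \<Rightarrow> nat set \<Rightarrow> nat \<Rightarrow> real" where
  "pay h a C i = a i ^ 2 / (\<Sum>j\<in>C. a j ^ 2) * reward h a C"

definition nash_eq :: "nat set \<Rightarrow> (nat \<Rightarrow> real) \<Rightarrow> real \<Rightarrow> nat set set \<Rightarrow> bool" where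
  "nash_eq N a h P \<longleftrightarrow> partition_on N P \<and> (\<forall>C\<in>P. winning h a C) \<and>
     (\<forall>C\<in>P. \<forall>i\<in>C.
        (\<forall>D\<in>P. D \<noteq> C \<longrightarrow> pay h a (insert i D) i \<le> pay h a C i) \<and>
        pay h a {i} i \<le> pay h a C i)"

definition num_winning :: "real \<Rightarrow> (nat \<Rightarrow> real) \<Rightarrow> nat set set \<Rightarrow> nat" where
  "num_winning h a P = card {C\<in>P. winning h a C}"

definition OPT :: "nat set \<Rightarrow> (nat \<Rightarrow> real) \<Rightarrow> real \<Rightarrow> nat" where
  "OPT N a h = Max {num_winning h a P | P. partition_on N P}"

definition price_of_stability :: "nat set \<Rightarrow> (nat \<Rightarrow> real) \<Rightarrow> real \<Rightarrow> real" where
  "price_of_stability N a h =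
     Min {real (OPT N a h) / real (num_winning h a P) | P. nash_eq N a h P}"

definition atomic_instance :: "nat set \<Rightarrow> (nat \<Rightarrow> real) \<Rightarrow> real \<Rightarrow> bool" where
  "atomic_instance N a h \<longleftrightarrow> finite N \<and> (\<forall>i\<in>N. 0 < a i \<and> a i < h)"

end

theory Submission
  imports Defs
begin

text \<open>One big player of stake \<open>H - 1\<close> faces \<open>(H - 2) H + 1\<close> unit players. Since
  \<open>(H - 1)\<^sup>2 = (H - 2) H + 1\<close>, a unit player sharing a pool with the big player gets at
  most \<open>1 / ((H - 2) H + 2)\<close>, while joining any other winning pool (which holds at most
  \<open>(H - 2) H\<close> unit players) pays at least \<open>1 / ((H - 2) H + 1)\<close>. So the grand coalition is
  the only Nash equilibrium, with a single winning pool, whereas the players can be split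
  into \<open>H - 1\<close> winning pools: the big player with one unit player, and \<open>H - 2\<close> pools of
  \<open>H\<close> unit players.\<close>

lemma num_winning_le_OPT:
  assumes "finite N" "partition_on N P"
  shows "num_winning h a P \<le> OPT N a h"
  unfolding OPT_def using assms finitely_many_partition_on[OF assms(1)]
  by (intro Max_ge) auto

lemma num_winning_all_winning:
  assumes "\<And>C. C \<in> P \<Longrightarrow> winning h a C"
  shows "num_winning h a P = card P"
  unfolding num_winning_def using assms by (simp add: Collect_conj_eq Int_absorb2 subsetI)

lemma price_of_stability_unique_nash_eq:
  assumes "nash_eq N a h P" "\<And>Q. nash_eq N a h Q \<Longrightarrow> Q = P"
  shows "price_of_stability N a h = real (OPT N a h) / real (num_winning h a P)"
proof -
  have "{real (OPT N a h) / real (num_winning h a Q) | Q. nash_eq N a h Q}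
        = {real (OPT N a h) / real (num_winning h a P)}"
    using assms by blast
  then show ?thesis by (simp add: price_of_stability_def)
qed

lemma pay_winning:
  "winning h a C \<Longrightarrow> pay h a C i = a i ^ 2 / (\<Sum>j\<in>C. a j ^ 2)"
  by (simp add: pay_def reward_def)

lemma nash_eq_grand_coalition:
  assumes "atomic_instance N a h" "N \<noteq> {}" "winning h a N"
  shows "nash_eq N a h {N}"
proof -
  have "pay h a {i} i \<le> pay h a N i" if "i \<in> N" for i
  proof -
    have "\<not> winning h a {i}"
      using assms(1) that by (auto simp: atomic_instance_def winning_def stake_def)
    then have "pay h a {i} i = 0" by (simp add: pay_def reward_def)
    also have "0 \<le> pay h a N i" by (simp add: pay_def reward_def sum_nonneg)
    finally show ?thesis .
  qed
  then show ?thesis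
    using assms(3) partition_on_space[OF assms(2)] by (auto simp: nash_eq_def)
qed

lemma nash_eq_big_player_unique:
  assumes inst: "atomic_instance N a h" and w: "w \<in> N"
    and unit: "\<And>j. j \<in> N \<Longrightarrow> j \<noteq> w \<Longrightarrow> a j = 1"
    and big: "real (card N) - 2 < a w ^ 2"
    and ne: "nash_eq N a h P"
  shows "P = {N}"
proof -
  have part: "partition_on N P" and win: "\<And>C. C \<in> P \<Longrightarrow> winning h a C"
    and stay: "\<And>C i D. C \<in> P \<Longrightarrow> i \<in> C \<Longrightarrow> D \<in> P \<Longrightarrow> D \<noteq> C \<Longrightarrow>
                 pay h a (insert i D) i \<le> pay h a C i"
    using ne unfolding nash_eq_def by blast+
  have fin: "finite N" and small: "a w < h"
    using inst w by (auto simp: atomic_instance_def)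
  obtain C where C: "C \<in> P" "w \<in> C"
    using w partition_onD1[OF part] by blast
  have CN: "C \<subseteq> N" using C(1) partition_onD1[OF part] by blast
  have "D = C" if D: "D \<in> P" for D
  proof (rule ccontr)
    assume DC: "D \<noteq> C"
    have "C \<noteq> {w}"
      using win[OF C(1)] small by (auto simp: winning_def stake_def)
    then obtain i where i: "i \<in> C" "i \<noteq> w" using C(2) by blast
    have ai: "a i = 1" using i CN unit by blast
    have DN: "D \<subseteq> N - {w, i}"
      using D DC C i partition_onD1[OF part] partition_onD2[OF part]
      by (auto simp: disjoint_def)
    then have finD: "finite D" and iD: "i \<notin> D" using fin finite_subset by blast+
    have "a w ^ 2 + 1 = (\<Sum>j\<in>{w, i}. a j ^ 2)" using i ai by simp
    also have "\<dots> \<le> (\<Sum>j\<in>C. a j ^ 2)"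
      using C(2) i CN fin by (intro sum_mono2) (auto intro: finite_subset)
    finally have SC: "a w ^ 2 + 1 \<le> (\<Sum>j\<in>C. a j ^ 2)" .
    have "card D \<le> card (N - {w, i})" using DN fin by (intro card_mono) auto
    also have "\<dots> = card N - 2" using w i CN fin by (auto simp: card_Diff_subset)
    finally have "card D \<le> card N - 2" .
    moreover have "card {w, i} \<le> card N"
      using w i CN fin by (intro card_mono) auto
    ultimately have cardD: "real (card D) \<le> real (card N) - 2"
      using i by simp
    have "stake a D \<le> stake a (insert i D)"
      using finD iD ai by (simp add: stake_def)
    then have "winning h a (insert i D)" using win[OF D] by (simp add: winning_def)
    moreover have "(\<Sum>j\<in>D. a j ^ 2) = (\<Sum>j\<in>D. 1)"
      using DN unit by (intro sum.cong) auto
    ultimately have "pay h a (insert i D) i = 1 / (real (card D) + 1)"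
      using ai finD iD by (simp add: pay_winning)
    moreover have "pay h a C i = 1 / (\<Sum>j\<in>C. a j ^ 2)"
      using win[OF C(1)] ai by (simp add: pay_winning)
    ultimately have "1 / (real (card D) + 1) \<le> 1 / (\<Sum>j\<in>C. a j ^ 2)"
      using stay[OF C(1) i(1) D DC] by simp
    moreover have "0 < (\<Sum>j\<in>C. a j ^ 2)"
      using SC zero_le_power2[of "a w"] by linarith
    ultimately have "(\<Sum>j\<in>C. a j ^ 2) \<le> real (card D) + 1"
      by (metis inverse_eq_divide inverse_le_iff_le of_nat_0_le_iff add_nonneg_pos zero_less_one)
    then show False using SC cardD big by linarith
  qed
  then have "P = {C}" using C(1) by blast
  then show ?thesis using partition_onD1[OF part] by simp
qed

lemma partition_on_consecutive_blocks:
  fixes s H :: nat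
  assumes "0 < H"
  shows "partition_on {s..<s + m * H} ((\<lambda>k. {s + k * H..<s + Suc k * H}) ` {..<m})"
proof (induction m)
  case 0
  then show ?case by (simp add: partition_on_empty)
next
  case (Suc m)
  let ?block = "\<lambda>k. {s + k * H..<s + Suc k * H}"
  have "\<Union>(?block ` {..<m}) = {s..<s + m * H}"
    using Suc.IH partition_onD1 by blast
  then have "disjnt (?block m) (\<Union>(?block ` {..<m}))"
    by (simp add: disjnt_def)
  moreover have "{s..<s + Suc m * H} - {s + m * H..<s + Suc m * H} = {s..<s + m * H}"
    by auto
  ultimately show ?case
    using Suc.IH assms by (simp add: lessThan_Suc partition_on_insert)
qed

definition big_player_players :: "nat \<Rightarrow> nat set" where
  "big_player_players H = {..<2 + (H - 2) * H}"

definition big_player_stake :: "nat \<Rightarrow> nat \<Rightarrow> real" where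
  "big_player_stake H i = (if i = 0 then real H - 1 else 1)"

lemma big_player_stake_square:
  "2 \<le> H \<Longrightarrow> big_player_stake H 0 ^ 2 = real ((H - 2) * H) + 1"
  by (simp add: big_player_stake_def of_nat_diff power2_eq_square algebra_simps)

lemma big_player_atomic_instance:
  "2 \<le> H \<Longrightarrow> atomic_instance (big_player_players H) (big_player_stake H) (real H)"
  by (simp add: atomic_instance_def big_player_players_def big_player_stake_def)

lemma big_player_OPT:
  assumes H: "2 \<le> H"
  shows "real H - 1 \<le> OPT (big_player_players H) (big_player_stake H) (real H)"
proof -
  let ?m = "H - 2"
  let ?block = "\<lambda>k. {2 + k * H..<2 + Suc k * H}"
  let ?P = "insert {0, 1} (?block ` {..<?m})"
  have blocks: "partition_on {2..<2 + ?m * H} (?block ` {..<?m})"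
    using H partition_on_consecutive_blocks[of H 2 ?m] by simp
  have part: "partition_on (big_player_players H) ?P"
  proof (rule partition_on_insert[THEN iffD2])
    show "disjnt {0, 1} (\<Union>(?block ` {..<?m}))"
      using partition_onD1[OF blocks] by (simp add: disjnt_def)
    have "big_player_players H - {0, 1} = {2..<2 + ?m * H}"
      by (auto simp: big_player_players_def)
    then show "partition_on (big_player_players H - {0, 1}) (?block ` {..<?m}) \<and>
        {0, 1} \<subseteq> big_player_players H \<and> {0, 1} \<noteq> {}"
      using blocks by (auto simp: big_player_players_def)
  qed
  have "winning (real H) (big_player_stake H) C" if CP: "C \<in> ?P" for C
  proof (cases "C = {0, 1}")
    case True
    then show ?thesis by (simp add: winning_def stake_def big_player_stake_def)
  next
    case False
    then obtain k where C: "C = ?block k" using CP by blast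
    then have "stake (big_player_stake H) C = (\<Sum>j\<in>C. 1)"
      unfolding stake_def by (intro sum.cong) (auto simp: big_player_stake_def)
    then show ?thesis using C by (simp add: winning_def)
  qed
  moreover have "card ?P = H - 1"
  proof -
    have "inj_on ?block {..<?m}"
      using H by (intro inj_onI) (simp add: atLeastLessThan_eq_iff)
    moreover have "{0, 1} \<notin> ?block ` {..<?m}"
      using partition_onD1[OF blocks] by (metis UnionI atLeastLessThan_iff insertI1 not_numeral_le_zero)
    ultimately show ?thesis using H by (simp add: card_image)
  qed
  ultimately have "num_winning (real H) (big_player_stake H) ?P = H - 1"
    using num_winning_all_winning[of ?P] by simp
  moreover have "num_winning (real H) (big_player_stake H) ?P
      \<le> OPT (big_player_players H) (big_player_stake H) (real H)"
    using part by (intro num_winning_le_OPT) (simp_all add: big_player_players_def)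
  ultimately show ?thesis using H by linarith
qed

lemma big_player_price_of_stability:
  assumes H: "2 \<le> H"
  shows "\<exists>P. nash_eq (big_player_players H) (big_player_stake H) (real H) P"
    and "real H - 1 \<le> price_of_stability (big_player_players H) (big_player_stake H) (real H)"
proof -
  let ?N = "big_player_players H" and ?a = "big_player_stake H"
  have inst: "atomic_instance ?N ?a (real H)"
    using H by (rule big_player_atomic_instance)
  have "stake ?a {0, 1} \<le> stake ?a ?N"
    unfolding stake_def using inst by (intro sum_mono2)
      (auto simp: atomic_instance_def big_player_players_def less_imp_le)
  then have win: "winning (real H) ?a ?N"
    by (simp add: winning_def stake_def big_player_stake_def)
  have "?N \<noteq> {}" by (auto simp: big_player_players_def)
  with inst have ne: "nash_eq ?N ?a (real H) {?N}"
    using win by (rule nash_eq_grand_coalition)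
  then show "\<exists>P. nash_eq ?N ?a (real H) P" by blast
  have unique: "Q = {?N}" if Q: "nash_eq ?N ?a (real H) Q" for Q
  proof (rule nash_eq_big_player_unique[OF inst _ _ _ Q])
    show "0 \<in> ?N" by (simp add: big_player_players_def)
    show "?a j = 1" if "j \<noteq> 0" for j
      using that by (simp add: big_player_stake_def)
    have "card ?N = 2 + (H - 2) * H" by (simp add: big_player_players_def)
    then show "real (card ?N) - 2 < ?a 0 ^ 2"
      using big_player_stake_square[OF H] by simp
  qed
  have "num_winning (real H) ?a {?N} = 1"
    using win num_winning_all_winning[of "{?N}"] by simp
  then have "price_of_stability ?N ?a (real H) = real (OPT ?N ?a (real H))"
    using price_of_stability_unique_nash_eq[OF ne unique] by simp
  then show "real H - 1 \<le> price_of_stability ?N ?a (real H)"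
    using big_player_OPT[OF H] by simp
qed

theorem theorem6p1:
  fixes h :: int
  assumes "h \<ge> 2"
  shows "\<exists>N a. atomic_instance N a (real_of_int h) \<and>
           (\<exists>P. nash_eq N a (real_of_int h) P) \<and>
           price_of_stability N a (real_of_int h) \<ge> (real_of_int h - 1) / 2"
proof -
  define H where "H = nat h"
  have H: "2 \<le> H" and h: "real_of_int h = real H"
    using assms by (simp_all add: H_def)
  have "(real H - 1) / 2 \<le> real H - 1" using H by simp
  then show ?thesis
    unfolding h using big_player_atomic_instance[OF H] big_player_price_of_stability[OF H]
    by (meson order_trans)
qed

end
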